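(* Consider the generalized linear model described in the context with $m=p=2$ and model matrix \[ \mathbf{X}=\begin{bmatrix}q_1(\mathbf{x}_1)&q_2(\mathbf{x}_1)\\ q_1(\mathbf{x}_2)&q_2(\mathbf{x}_2)\end{bmatrix} \] of full rank, and suppose $\nu_i>0$ for $i=1,2$. Then an allocation $\mathbf{w}_*=(w_1^*,w_2^* )^T\in S_2$ is A-optimal if and only if $w_i^*\propto\{\nu_i[q_1(\mathbf{x}_i)^2+q_2(\mathbf{x}_i)^2]\}^{-1/2}$, $i=1,2$.
   Context: Generalized linear model (GLM): independent responses $Y_i$ from a one-parameter exponential family with $E(Y_i)=\mu_i$ and $\eta_i=g(\mu_i)=\mathbf{q}(\mathbf{x}_i)^T\boldsymbol\beta$, where $g$ is the link function, $\mathbf{q}(\mathbf{x})=(q_1(\mathbf{x}),\ldots,q_p(\mathbf{x}))^T$ are predictor functions, and $\boldsymbol\beta\in\mathbb{R}^p$ is a fixed (assumed) parameter vector. Let $\nu_i=(\partial\mu_i/\partial\eta_i)^2/\mathrm{Var}(Y_i)$. Let $S_m=\{\mathbf{w}\in\mathbb{R}^m: w_i\ge0,\sum_iw_i=1\}$, $\mathbf{W}=\mathrm{diag}\{w_1\nu_1,\ldots,w_m\nu_m\}$, $f(\mathbf{w})=|\mathbf{X}^T\mathbf{W}\mathbf{X}|$, and $h(\mathbf{w})=[\mathrm{tr}((\mathbf{X}^T\mathbf{W}\mathbf{X})^{-1})]^{-1}$ if $f(\mathbf{w})>0$, $h(\mathbf{w})=0$ otherwise. An allocation is A-optimal if it maximizes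 $h$ over $S_m$. *)

theory Defs
  imports "HOL-Analysis.Analysis"
begin

definition alloc_simplex :: "(real^'m) set" where
  "alloc_simplex = {w. (\<forall>i. 0 \<le> w $ i) \<and> (\<Sum>i\<in>UNIV. w $ i) = 1}"

definition W_mat :: "real^'m \<Rightarrow> real^'m \<Rightarrow> real^'m^'m" where
  "W_mat nu w = (\<chi> i j. if i = j then w $ i * nu $ i else 0)"

definition info_mat :: "real^'p^'m \<Rightarrow> real^'m \<Rightarrow> real^'m \<Rightarrow> real^'p^'p" where
  "info_mat X nu w = transpose X ** W_mat nu w ** X"

definition f_crit :: "real^'p^'m \<Rightarrow> real^'m \<Rightarrow> real^'m \<Rightarrow> real" where
  "f_crit X nu w = det (info_mat X nu w)"

definition h_crit :: "real^'p^'m \<Rightarrow> real^'m \<Rightarrow> real^'m \<Rightarrow> real" where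
  "h_crit X nu w = (if f_crit X nu w > 0
      then inverse (trace (matrix_inv (info_mat X nu w))) else 0)"

definition A_optimal :: "real^'p^'m \<Rightarrow> real^'m \<Rightarrow> real^'m \<Rightarrow> bool" where
  "A_optimal X nu w \<longleftrightarrow> w \<in> alloc_simplex \<and> (\<forall>v\<in>alloc_simplex. h_crit X nu v \<le> h_crit X nu w)"

end

theory Submission imports Defs begin

(* With two design points the information matrix M = X^T W X has
   det M = (det X)^2 nu_1 nu_2 w_1 w_2 and trace M = a_1 w_1 + a_2 w_2, where a_i = nu_i |x_i|^2,
   and every invertible 2x2 matrix satisfies tr (M^-1) = tr M / det M.  So h is a positive multiple
   of w_1 w_2 / (a_1 w_1 + a_2 w_2).  On w_1 + w_2 = 1 the denominator decomposes as
   (sqrt a_1 + sqrt a_2)^2 w_1 w_2 + (w_1 sqrt a_1 - w_2 sqrt a_2)^2, so h is maximal exactly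
   when w_1 sqrt a_1 = w_2 sqrt a_2, i.e. when w_i is proportional to a_i^(-1/2). *)

lemma matrix_inv_unique:
  fixes A :: "'a::comm_semiring_1^'n^'n"
  assumes "A ** B = mat 1" and "B ** A = mat 1"
  shows "matrix_inv A = B"
proof -
  have "A ** matrix_inv A = mat 1 \<and> matrix_inv A ** A = mat 1"
    unfolding matrix_inv_def by (rule someI[of _ B]) (use assms in blast)
  then show ?thesis
    by (metis assms(2) matrix_mul_assoc matrix_mul_lid matrix_mul_rid)
qed

lemma matrix_inv_2:
  fixes A :: "real^2^2"
  assumes "det A \<noteq> 0"
  shows "matrix_inv A = inverse (det A) *\<^sub>R vector [vector [A$2$2, - A$1$2], vector [- A$2$1, A$1$1]]"
    (is "_ = _ *\<^sub>R ?adj")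
proof (rule matrix_inv_unique)
  have "A ** ?adj = det A *\<^sub>R mat 1" and "?adj ** A = det A *\<^sub>R mat 1"
    by (simp_all add: vec_eq_iff forall_2 matrix_matrix_mult_def sum_2 mat_def det_2 algebra_simps)
  then show "A ** (inverse (det A) *\<^sub>R ?adj) = mat 1" and "(inverse (det A) *\<^sub>R ?adj) ** A = mat 1"
    using assms by (simp_all add: matrix_scalar_ac scalar_matrix_assoc[symmetric])
qed

lemma trace_matrix_inv_2:
  fixes A :: "real^2^2"
  assumes "det A \<noteq> 0"
  shows "trace (matrix_inv A) = trace A / det A"
  using assms by (simp add: matrix_inv_2 trace_def sum_2 field_simps)

lemma trace_info_mat:
  fixes X :: "real^'p^'m"
  shows "trace (info_mat X nu w) = (\<Sum>i\<in>UNIV. w$i * nu$i * (\<Sum>j\<in>UNIV. (X$i$j)^2))"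
proof -
  have "info_mat X nu w $ j $ j = (\<Sum>i\<in>UNIV. w$i * nu$i * (X$i$j)^2)" for j
    by (simp add: info_mat_def W_mat_def matrix_matrix_mult_def transpose_def
        power2_eq_square sum_distrib_right mult_ac if_distrib cong: if_cong)
  then have "trace (info_mat X nu w) = (\<Sum>j\<in>UNIV. \<Sum>i\<in>UNIV. w$i * nu$i * (X$i$j)^2)"
    by (simp add: trace_def)
  also have "\<dots> = (\<Sum>i\<in>UNIV. \<Sum>j\<in>UNIV. w$i * nu$i * (X$i$j)^2)"
    by (rule sum.swap)
  finally show ?thesis
    by (simp add: sum_distrib_left)
qed

lemma det_info_mat:
  fixes X :: "real^'n^'n"
  shows "det (info_mat X nu w) = (det X)^2 * (\<Prod>i\<in>UNIV. w$i * nu$i)"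
  unfolding info_mat_def by (simp add: det_mul W_mat_def det_diagonal power2_eq_square)

lemma row_sum_squares_pos:
  fixes X :: "real^'n^'n"
  assumes "det X \<noteq> 0"
  shows "0 < (\<Sum>j\<in>UNIV. (X$i$j)^2)"
proof (rule ccontr)
  assume "\<not> 0 < (\<Sum>j\<in>UNIV. (X$i$j)^2)"
  then have "(\<Sum>j\<in>UNIV. (X$i$j)^2) = 0"
    by (meson sum_nonneg zero_le_power2 order_antisym not_less)
  then have "row i X = 0"
    by (simp add: sum_nonneg_eq_0_iff row_def vec_eq_iff)
  then show False using assms det_zero_row(1) by blast
qed

lemma alloc_simplex_2:
  "(v::real^2) \<in> alloc_simplex \<longleftrightarrow> 0 \<le> v$1 \<and> 0 \<le> v$2 \<and> v$1 + v$2 = 1"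
  by (simp add: alloc_simplex_def forall_2 sum_2)

lemma weighted_sum_eq_sqrt_square_decomp:
  fixes a b v1 v2 :: real
  assumes "0 \<le> a" "0 \<le> b" "v1 + v2 = 1"
  shows "a * v1 + b * v2 = (sqrt a + sqrt b)^2 * (v1 * v2) + (v1 * sqrt a - v2 * sqrt b)^2"
proof -
  have "a * v1 + b * v2 = (sqrt a)^2 * v1 * (v1 + v2) + (sqrt b)^2 * v2 * (v1 + v2)"
    using assms by simp
  then show ?thesis by (simp add: power2_eq_square algebra_simps)
qed

lemma prod_div_weighted_sum_le:
  fixes a b v1 v2 :: real
  assumes "0 < a" "0 < b" "0 \<le> v1" "0 \<le> v2" "v1 + v2 = 1"
  shows "v1 * v2 / (a * v1 + b * v2) \<le> 1 / (sqrt a + sqrt b)^2"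
    and "v1 * v2 / (a * v1 + b * v2) = 1 / (sqrt a + sqrt b)^2 \<longleftrightarrow> v1 * sqrt a = v2 * sqrt b"
proof -
  have "0 < a * v1 + b * v2"
    using assms by (cases "v1 = 0") (auto intro: add_pos_nonneg)
  moreover have "0 < sqrt a + sqrt b" using assms by (simp add: add_pos_pos)
  ultimately have "v1 * v2 / (a * v1 + b * v2) \<le> 1 / (sqrt a + sqrt b)^2 \<longleftrightarrow>
                     (sqrt a + sqrt b)^2 * (v1 * v2) \<le> a * v1 + b * v2"
    and "v1 * v2 / (a * v1 + b * v2) = 1 / (sqrt a + sqrt b)^2 \<longleftrightarrow>
                     (sqrt a + sqrt b)^2 * (v1 * v2) = a * v1 + b * v2"
    by (simp_all add: divide_simps mult.commute)
  then show "v1 * v2 / (a * v1 + b * v2) \<le> 1 / (sqrt a + sqrt b)^2"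
    and "v1 * v2 / (a * v1 + b * v2) = 1 / (sqrt a + sqrt b)^2 \<longleftrightarrow> v1 * sqrt a = v2 * sqrt b"
    using weighted_sum_eq_sqrt_square_decomp[of a b v1 v2] assms by simp_all
qed

lemma alloc_simplex_2_argmax_prod_div_weighted_sum:
  fixes a w :: "real^2"
  assumes "0 < a$1" "0 < a$2" "w \<in> alloc_simplex"
  shows "(\<forall>v\<in>alloc_simplex :: (real^2) set. v$1 * v$2 / (a$1 * v$1 + a$2 * v$2) \<le> w$1 * w$2 / (a$1 * w$1 + a$2 * w$2))
    \<longleftrightarrow> w$1 * sqrt (a$1) = w$2 * sqrt (a$2)"
proof -
  let ?\<phi> = "\<lambda>v::real^2. v$1 * v$2 / (a$1 * v$1 + a$2 * v$2)"
  let ?bound = "1 / (sqrt (a$1) + sqrt (a$2))^2"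
  note bound = prod_div_weighted_sum_le[OF assms(1,2)]
  define u :: "real^2" where
    "u = vector [sqrt (a$2) / (sqrt (a$1) + sqrt (a$2)), sqrt (a$1) / (sqrt (a$1) + sqrt (a$2))]"
  have "0 < sqrt (a$1) + sqrt (a$2)" using assms by (simp add: add_pos_pos)
  then have "u \<in> alloc_simplex" and "u$1 * sqrt (a$1) = u$2 * sqrt (a$2)"
    using assms by (simp_all add: u_def alloc_simplex_2 add_divide_distrib[symmetric])
  then have u: "u \<in> alloc_simplex" "?\<phi> u = ?bound"
    using bound(2) by (auto simp: alloc_simplex_2)
  have le: "?\<phi> v \<le> ?bound" if "v \<in> alloc_simplex" for v
    using bound(1) that by (simp add: alloc_simplex_2)
  have "(\<forall>v\<in>alloc_simplex. ?\<phi> v \<le> ?\<phi> w) \<longleftrightarrow> ?\<phi> w = ?bound"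
    using u le assms(3) by (metis order_antisym)
  also have "\<dots> \<longleftrightarrow> w$1 * sqrt (a$1) = w$2 * sqrt (a$2)"
    using bound(2) assms(3) by (simp add: alloc_simplex_2)
  finally show ?thesis .
qed

lemma proportional_powr_minus_half_iff:
  fixes w a :: "real^'n"
  assumes "\<forall>i. 0 < a$i"
  shows "(\<exists>c. \<forall>i. w$i = c * (a$i) powr (-1/2)) \<longleftrightarrow> (\<forall>i j. w$i * sqrt (a$i) = w$j * sqrt (a$j))"
proof -
  have inv: "(a$i) powr (-1/2) = 1 / sqrt (a$i)" for i
    using assms by (simp add: powr_minus_divide powr_half_sqrt less_imp_le)
  have "w$i = c * (a$i) powr (-1/2) \<longleftrightarrow> w$i * sqrt (a$i) = c" for i c
    unfolding inv using assms[rule_format, of i] by (simp add: eq_divide_eq)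
  then show ?thesis by metis
qed

lemma h_crit_eq_f_crit_div_trace:
  fixes X :: "real^2^'m"
  assumes "0 \<le> f_crit X nu w"
  shows "h_crit X nu w = f_crit X nu w / trace (info_mat X nu w)"
  using assms trace_matrix_inv_2[of "info_mat X nu w"] by (auto simp: h_crit_def f_crit_def)

lemma h_crit_2_on_alloc_simplex:
  fixes X :: "real^2^2"
  assumes "0 \<le> nu$1 * nu$2" and "v \<in> alloc_simplex"
  shows "h_crit X nu v = (det X)^2 * (nu$1 * nu$2) * (v$1 * v$2) / trace (info_mat X nu v)"
proof -
  have "f_crit X nu v = (det X)^2 * (nu$1 * nu$2) * (v$1 * v$2)"
    by (simp add: f_crit_def det_info_mat UNIV_2 mult_ac)
  moreover have "0 \<le> (det X)^2 * (nu$1 * nu$2) * (v$1 * v$2)"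
    using assms by (simp add: alloc_simplex_2)
  ultimately show ?thesis
    using h_crit_eq_f_crit_div_trace[of X nu v] by simp
qed

theorem corollary2:
  fixes X :: "real^2^2" and nu :: "real^2" and w :: "real^2"
  assumes "rank X = 2"
    and "\<forall>i. nu $ i > 0"
    and "w \<in> alloc_simplex"
  shows "A_optimal X nu w \<longleftrightarrow>
    (\<exists>c. \<forall>i. w $ i = c * (nu $ i * (\<Sum>j\<in>UNIV. (X $ i $ j)^2)) powr (-1/2))"
proof -
  define a :: "real^2" where "a = (\<chi> i. nu$i * (\<Sum>j\<in>UNIV. (X$i$j)^2))"
  define K where "K = (det X)^2 * (nu$1 * nu$2)"
  have "det X \<noteq> 0" using assms(1) by (simp add: det_eq_0_rank)
  have a_pos: "\<forall>i. 0 < a$i" and "0 < K"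
    using assms(2) \<open>det X \<noteq> 0\<close> row_sum_squares_pos[OF \<open>det X \<noteq> 0\<close>]
    by (simp_all add: a_def K_def)
  define \<phi> :: "real^2 \<Rightarrow> real" where "\<phi> v = v$1 * v$2 / (a$1 * v$1 + a$2 * v$2)" for v
  have h_crit_eq: "h_crit X nu v = K * \<phi> v" if "v \<in> alloc_simplex" for v
    using that assms(2) h_crit_2_on_alloc_simplex[of nu v X]
    by (simp add: trace_info_mat sum_2 a_def K_def \<phi>_def less_imp_le)
  have "A_optimal X nu w \<longleftrightarrow> (\<forall>v\<in>alloc_simplex. \<phi> v \<le> \<phi> w)"
    using assms(3) h_crit_eq \<open>0 < K\<close> by (simp add: A_optimal_def)
  also have "\<dots> \<longleftrightarrow> w$1 * sqrt (a$1) = w$2 * sqrt (a$2)"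
    unfolding \<phi>_def using a_pos assms(3) by (simp add: alloc_simplex_2_argmax_prod_div_weighted_sum)
  also have "\<dots> \<longleftrightarrow> (\<forall>i j. w$i * sqrt (a$i) = w$j * sqrt (a$j))"
    by (auto simp: forall_2)
  also have "\<dots> \<longleftrightarrow> (\<exists>c. \<forall>i. w$i = c * (a$i) powr (-1/2))"
    by (rule proportional_powr_minus_half_iff[OF a_pos, symmetric])
  finally show ?thesis by (simp add: a_def)
qed

end
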